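(* Let $d\ge1$, let $Z$ be a simple $d$-cycle and $D\subseteq\mathrm{Supp}(Z)$. Suppose that deleting the vertices corresponding to $D$ from $G_d(Z)$ leaves a graph with $m>1$ connected components. Then there exist $(d-1)$-cycles $C_1,\dots,C_m$ supported on $K(D)$ such that (a) any two of them have disjoint supports; and (b) any $m-1$ of them are linearly independent modulo the space $\mathcal B_{d-1}(K(D))$ of $(d-1)$-boundaries of $K(D)$, while all $m$ of them are linearly dependent modulo $\mathcal B_{d-1}(K(D))$.
   Context: Fix a field $\mathbb F$. A $d$-simplex is a $(d+1)$-element subset of $[n]$ oriented by increasing order $s_1<\dots<s_{d+1}$. A $d$-chain is a formal $\mathbb F$-combination of $d$-simplices; its support is the set of simplices with nonzero coefficient, and it is supported on a complex $K$ if its support lies in $K$. $\partial\sigma=\sum_i(-1)^{i-1}(\sigma\setminus\{s_i\})$, extended linearly. A $d$-cycle is a chain with $\partial Z=0$; it is simple if $Z\ne0$ and every $d$-cycle supported in $\mathrm{Supp}(Z)$ is a scalar multiple of $Z$. For a set $S$ of simplices, $K(S)$ is the complex of all subsets of members of $S$. $\mathcal B_{d-1}(K)=\{\partial B: B \text{ a } d\text{-chain supported on } K\}$. The facet graph $G_d(Z)$ has vertex set $\mathrm{Supp}(Z)$, two $d$-simplices adjacent iff they share a $(d-1)$-face. *)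

theory Defs
  imports Main
begin

text \<open>Vertices are 1..n. A k-element subset of {1..n} is a (k-1)-simplex.
 Chains are functions from vertex sets to the field, vanishing off simplices.\<close>

definition supp :: "(nat set \<Rightarrow> 'f::zero) \<Rightarrow> nat set set" where
  "supp c = {\<sigma>. c \<sigma> \<noteq> 0}"

definition is_chain :: "nat \<Rightarrow> nat \<Rightarrow> (nat set \<Rightarrow> 'f::zero) \<Rightarrow> bool" where
  "is_chain n k c \<longleftrightarrow> (\<forall>\<sigma>. c \<sigma> \<noteq> 0 \<longrightarrow> \<sigma> \<subseteq> {1..n} \<and> card \<sigma> = k)"

text \<open>Boundary of a chain on k-vertex simplices: removing the i-th smallest vertex v
 of sigma gets sign (-1)^(i-1) = (-1)^(number of vertices of tau below v).\<close>
definition bd :: "nat \<Rightarrow> nat \<Rightarrow> (nat set \<Rightarrow> 'f::field) \<Rightarrow> nat set \<Rightarrow> 'f" where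
  "bd n k c \<tau> = (if \<tau> \<subseteq> {1..n} \<and> card \<tau> + 1 = k
      then (\<Sum>v\<in>{1..n} - \<tau>. (-1) ^ card {x\<in>\<tau>. x < v} * c (insert v \<tau>))
      else 0)"

definition is_cycle :: "nat \<Rightarrow> nat \<Rightarrow> (nat set \<Rightarrow> 'f::field) \<Rightarrow> bool" where
  "is_cycle n k c \<longleftrightarrow> is_chain n k c \<and> bd n k c = (\<lambda>_. 0)"

definition simple_cycle :: "nat \<Rightarrow> nat \<Rightarrow> (nat set \<Rightarrow> 'f::field) \<Rightarrow> bool" where
  "simple_cycle n k Z \<longleftrightarrow> is_cycle n k Z \<and> Z \<noteq> (\<lambda>_. 0) \<and>
     (\<forall>W. is_cycle n k W \<and> supp W \<subseteq> supp Z \<longrightarrow> (\<exists>a. W = (\<lambda>\<sigma>. a * Z \<sigma>)))"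

definition cplx :: "nat set set \<Rightarrow> nat set set" where
  "cplx S = {\<tau>. \<exists>\<sigma>\<in>S. \<tau> \<subseteq> \<sigma>}"

definition boundaries :: "nat \<Rightarrow> nat \<Rightarrow> nat set set \<Rightarrow> (nat set \<Rightarrow> 'f::field) set" where
  "boundaries n k K = {bd n k B | B. is_chain n k B \<and> supp B \<subseteq> K}"

definition facet_adj :: "nat \<Rightarrow> nat set \<Rightarrow> nat set \<Rightarrow> bool" where
  "facet_adj d \<sigma> \<tau> \<longleftrightarrow> \<sigma> \<noteq> \<tau> \<and> card (\<sigma> \<inter> \<tau>) = d"

definition components :: "'a set \<Rightarrow> ('a \<Rightarrow> 'a \<Rightarrow> bool) \<Rightarrow> 'a set set" where
  "components V E = (\<lambda>x. {y\<in>V. (x, y) \<in> {(a, b). a \<in> V \<and> b \<in> V \<and> E a b}\<^sup>*}) ` V"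

end

theory Submission
  imports Defs
begin

text \<open>Let \<open>P_1, ..., P_m\<close> be the components of \<open>G_d(Z) - D\<close>, let \<open>Z_i\<close> be the restriction of
 \<open>Z\<close> to \<open>P_i\<close> and put \<open>C_i = \<partial>Z_i\<close>. A \<open>(d-1)\<close>-face outside \<open>K(D)\<close> has all its cofaces in
 \<open>Supp(Z)\<close> outside \<open>D\<close>, and they are pairwise adjacent, so they all lie in one component;
 hence such a face sees \<open>C_i\<close> exactly as it sees \<open>\<partial>Z = 0\<close>, and \<open>C_i\<close> lives on \<open>K(D)\<close>.
 A face common to \<open>C_i\<close> and \<open>C_j\<close> would make \<open>P_i\<close> and \<open>P_j\<close> adjacent.
 Since \<open>Z = Z|D + \<Sum> Z_i\<close>, the sum of all \<open>C_i\<close> is the boundary \<open>-\<partial>(Z|D)\<close>. Conversely, if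
 \<open>\<Sum>_{i\<noteq>j} a_i C_i = \<partial>B\<close> with \<open>B\<close> on \<open>K(D)\<close>, then \<open>\<Sum>_{i\<noteq>j} a_i Z_i - B\<close> is a cycle
 supported in \<open>Supp(Z)\<close>, hence a multiple of \<open>Z\<close> by simplicity; it vanishes on \<open>P_j\<close>, so it
 is zero, and comparing on \<open>P_i\<close> gives \<open>a_i = 0\<close>.\<close>

lemma sum_antisym_offdiag_eq_0:
  fixes F :: "'a \<Rightarrow> 'a \<Rightarrow> 'f::ab_group_add"
  assumes "finite A" "\<And>v w. v \<in> A \<Longrightarrow> w \<in> A \<Longrightarrow> v \<noteq> w \<Longrightarrow> F w v = - F v w"
  shows "(\<Sum>v\<in>A. \<Sum>w\<in>A - {v}. F v w) = 0"
  using assms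
proof (induction A rule: finite_induct)
  case empty
  show ?case by simp
next
  case (insert x A)
  have IH: "(\<Sum>v\<in>A. \<Sum>w\<in>A - {v}. F v w) = 0"
    by (rule insert.IH) (rule insert.prems, auto)
  have split: "(\<Sum>w\<in>insert x A - {v}. F v w) = F v x + (\<Sum>w\<in>A - {v}. F v w)" if "v \<in> A" for v
  proof -
    have "insert x A - {v} = insert x (A - {v})" "x \<notin> A - {v}" using insert(2) that by auto
    then show ?thesis using insert(1) by simp
  qed
  have "insert x A - {x} = A" using insert(2) by auto
  then have "(\<Sum>v\<in>insert x A. \<Sum>w\<in>insert x A - {v}. F v w)
      = (\<Sum>w\<in>A. F x w) + (\<Sum>v\<in>A. F v x + (\<Sum>w\<in>A - {v}. F v w))"
    by (simp only: sum.insert[OF insert(1,2)] sum.cong[OF refl split])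
  also have "\<dots> = (\<Sum>w\<in>A. F x w) + (\<Sum>v\<in>A. F v x)"
    using IH by (simp add: sum.distrib)
  also have "(\<Sum>v\<in>A. F v x) = (\<Sum>v\<in>A. - F x v)"
    using insert.prems insert(2) by (intro sum.cong) auto
  finally show ?case by (simp add: sum_negf)
qed

lemma card_less_insert:
  assumes "finite \<rho>" "v \<notin> \<rho>"
  shows "card {x\<in>insert v \<rho>. x < w} = card {x\<in>\<rho>. x < w} + (if v < w then 1 else 0)"
proof -
  have "{x\<in>insert v \<rho>. x < w} = (if v < w then insert v {x\<in>\<rho>. x < w} else {x\<in>\<rho>. x < w})"
    by auto
  then show ?thesis using assms by simp
qed

lemma bd_nonface: "\<not> (\<tau> \<subseteq> {1..n} \<and> card \<tau> + 1 = k) \<Longrightarrow> bd n k c \<tau> = 0"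
  unfolding bd_def by (rule if_not_P)

lemma bd_face: "\<tau> \<subseteq> {1..n} \<Longrightarrow> card \<tau> + 1 = k \<Longrightarrow>
   bd n k c \<tau> = (\<Sum>v\<in>{1..n} - \<tau>. (-1) ^ card {x\<in>\<tau>. x < v} * c (insert v \<tau>))"
  unfolding bd_def by (rule if_P) simp

lemma bd_cong_cofaces:
  "(\<And>v. v \<in> {1..n} - \<tau> \<Longrightarrow> c (insert v \<tau>) = c' (insert v \<tau>)) \<Longrightarrow> bd n k c \<tau> = bd n k c' \<tau>"
  by (simp add: bd_def)

lemma bd_nonzero_imp_coface:
  assumes "bd n k c \<tau> \<noteq> 0"
  shows "\<tau> \<subseteq> {1..n} \<and> card \<tau> + 1 = k \<and> (\<exists>v\<in>{1..n} - \<tau>. c (insert v \<tau>) \<noteq> 0)"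
proof -
  have face: "\<tau> \<subseteq> {1..n} \<and> card \<tau> + 1 = k"
    using assms bd_nonface by blast
  then have "(\<Sum>v\<in>{1..n} - \<tau>. (-1) ^ card {x\<in>\<tau>. x < v} * c (insert v \<tau>)) \<noteq> 0"
    using assms by (simp add: bd_face)
  then obtain v where "v \<in> {1..n} - \<tau>" "(-1) ^ card {x\<in>\<tau>. x < v} * c (insert v \<tau>) \<noteq> 0"
    by (meson sum.not_neutral_contains_not_neutral)
  then show ?thesis using face by auto
qed

text \<open>The two ways of removing \<open>v\<close> and \<open>w\<close> from \<open>\<rho> \<union> {v, w}\<close> carry opposite signs, because
 removing the smaller one first does not shift the position of the larger one.\<close>
lemma bd_bd: "bd n k (bd n (Suc k) (c :: nat set \<Rightarrow> 'f::field)) = (\<lambda>_. 0)"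
proof
  fix \<rho>
  show "bd n k (bd n (Suc k) c) \<rho> = 0"
  proof (cases "\<rho> \<subseteq> {1..n} \<and> card \<rho> + 1 = k")
    case False
    then show ?thesis by (rule bd_nonface)
  next
    case True
    define A where "A = {1..n} - \<rho>"
    define s where "s v = ((-1::'f) ^ card {x\<in>\<rho>. x < v})" for v
    define F where "F v w = s v * (s w * (if v < w then -1 else 1) * c (insert w (insert v \<rho>)))"
      for v w
    have fin: "finite \<rho>" using True finite_subset by blast
    have inner: "bd n (Suc k) c (insert v \<rho>)
        = (\<Sum>w\<in>A - {v}. s w * (if v < w then -1 else 1) * c (insert w (insert v \<rho>)))"
      if "v \<in> A" for v
    proof -
      have v: "v \<notin> \<rho>" "v \<in> {1..n}" using that by (auto simp: A_def)
      have sign: "(-1::'f) ^ card {x\<in>insert v \<rho>. x < w} = s w * (if v < w then -1 else 1)" for w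
        unfolding card_less_insert[OF fin v(1)] s_def power_add by simp
      have "{1..n} - insert v \<rho> = A - {v}" by (auto simp: A_def)
      moreover have "insert v \<rho> \<subseteq> {1..n}" "card (insert v \<rho>) + 1 = Suc k"
        using True fin v by auto
      ultimately show ?thesis
        by (simp only: bd_face sign mult.assoc)
    qed
    have "bd n k (bd n (Suc k) c) \<rho> = (\<Sum>v\<in>A. s v * bd n (Suc k) c (insert v \<rho>))"
      using True by (simp add: bd_face A_def s_def)
    also have "\<dots> = (\<Sum>v\<in>A. \<Sum>w\<in>A - {v}. F v w)"
      by (intro sum.cong refl) (simp add: inner F_def sum_distrib_left)
    also have "\<dots> = 0"
    proof (rule sum_antisym_offdiag_eq_0)
      show "finite A" by (simp add: A_def)
      fix v w
      assume "v \<in> A" "w \<in> A" "v \<noteq> w"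
      then show "F w v = - F v w"
        by (cases "v < w") (auto simp: F_def insert_commute)
    qed
    finally show ?thesis .
  qed
qed

lemma bd_is_cycle: "is_cycle n k (bd n (Suc k) c)"
  using bd_nonzero_imp_coface[of n "Suc k" c] bd_bd[of n k c]
  by (auto simp: is_cycle_def is_chain_def)

lemma bd_linear_combination:
  assumes "finite I"
  shows "bd n k (\<lambda>\<sigma>. \<Sum>i\<in>I. a i * f i \<sigma>) \<tau> = (\<Sum>i\<in>I. a i * bd n k (f i) \<tau>)"
proof (cases "\<tau> \<subseteq> {1..n} \<and> card \<tau> + 1 = k")
  case True
  then have "bd n k (\<lambda>\<sigma>. \<Sum>i\<in>I. a i * f i \<sigma>) \<tau>
      = (\<Sum>v\<in>{1..n} - \<tau>. \<Sum>i\<in>I. (-1) ^ card {x\<in>\<tau>. x < v} * (a i * f i (insert v \<tau>)))"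
    by (simp add: bd_face sum_distrib_left)
  also have "\<dots> = (\<Sum>i\<in>I. \<Sum>v\<in>{1..n} - \<tau>. (-1) ^ card {x\<in>\<tau>. x < v} * (a i * f i (insert v \<tau>)))"
    by (rule sum.swap)
  also have "\<dots> = (\<Sum>i\<in>I. a i * bd n k (f i) \<tau>)"
    using True by (simp add: bd_face sum_distrib_left mult_ac)
  finally show ?thesis .
next
  case False
  then show ?thesis by (simp add: bd_nonface)
qed

lemma bd_add: "bd n k (\<lambda>\<sigma>. f \<sigma> + g \<sigma>) \<tau> = bd n k f \<tau> + bd n k g \<tau>"
  by (simp add: bd_def sum.distrib algebra_simps)

lemma bd_diff: "bd n k (\<lambda>\<sigma>. f \<sigma> - g \<sigma>) \<tau> = bd n k f \<tau> - bd n k g \<tau>"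
  by (simp add: bd_def sum_subtractf algebra_simps)

lemma bd_uminus: "bd n k (\<lambda>\<sigma>. - f \<sigma>) \<tau> = - bd n k f \<tau>"
  by (simp add: bd_def sum_negf)

lemma is_chain_supp_subset: "is_chain n k c \<Longrightarrow> supp c' \<subseteq> supp c \<Longrightarrow> is_chain n k c'"
  by (auto simp: is_chain_def supp_def)

lemma chain_on_cplx_supp_subset:
  assumes "is_chain n k B" "supp B \<subseteq> cplx D" "\<And>\<delta>. \<delta> \<in> D \<Longrightarrow> finite \<delta> \<and> card \<delta> = k"
  shows "supp B \<subseteq> D"
proof
  fix \<sigma>
  assume \<sigma>: "\<sigma> \<in> supp B"
  then obtain \<delta> where \<delta>: "\<delta> \<in> D" "\<sigma> \<subseteq> \<delta>"
    using assms(2) by (auto simp: cplx_def)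
  have "card \<sigma> = card \<delta>"
    using \<sigma> \<delta>(1) assms(1,3) by (auto simp: is_chain_def supp_def)
  then show "\<sigma> \<in> D"
    using \<delta> assms(3) card_subset_eq by metis
qed

definition restrict_chain :: "(nat set \<Rightarrow> 'f::zero) \<Rightarrow> nat set set \<Rightarrow> nat set \<Rightarrow> 'f" where
  "restrict_chain c S \<sigma> = (if \<sigma> \<in> S then c \<sigma> else 0)"

lemma facet_adj_insert:
  assumes "v \<notin> \<tau>" "w \<notin> \<tau>" "v \<noteq> w" "card \<tau> = d"
  shows "facet_adj d (insert v \<tau>) (insert w \<tau>)"
proof -
  have "insert v \<tau> \<inter> insert w \<tau> = \<tau>" using assms(1-3) by auto
  then show ?thesis using assms by (auto simp: facet_adj_def)
qed

lemma supp_bd_restrict_chain_disjoint: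
  assumes "\<And>\<sigma> \<rho>. \<sigma> \<in> S \<Longrightarrow> \<rho> \<in> T \<Longrightarrow> \<sigma> \<noteq> \<rho> \<and> \<not> facet_adj d \<sigma> \<rho>"
  shows "supp (bd n (d + 1) (restrict_chain c S)) \<inter> supp (bd n (d + 1) (restrict_chain c T)) = {}"
proof (rule ccontr)
  assume "\<not> ?thesis"
  then obtain \<tau> where "bd n (d + 1) (restrict_chain c S) \<tau> \<noteq> 0" "bd n (d + 1) (restrict_chain c T) \<tau> \<noteq> 0"
    by (auto simp: supp_def)
  then obtain v w where \<tau>: "\<tau> \<subseteq> {1..n}" "card \<tau> = d" and
    v: "v \<notin> \<tau>" "insert v \<tau> \<in> S" and w: "w \<notin> \<tau>" "insert w \<tau> \<in> T"
    by (auto simp: restrict_chain_def split: if_splits dest!: bd_nonzero_imp_coface)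
  have "v \<noteq> w" using assms v w by blast
  then have "facet_adj d (insert v \<tau>) (insert w \<tau>)"
    using v w \<tau> by (intro facet_adj_insert)
  then show False using assms v w by blast
qed

lemma supp_bd_restrict_chain_subset_cplx:
  assumes "bd n (d + 1) c = (\<lambda>_. 0)"
    and closed: "\<And>\<sigma> \<rho>. \<sigma> \<in> S \<Longrightarrow> \<rho> \<in> supp c - D \<Longrightarrow> facet_adj d \<sigma> \<rho> \<Longrightarrow> \<rho> \<in> S"
  shows "supp (bd n (d + 1) (restrict_chain c S)) \<subseteq> cplx D"
proof
  fix \<tau>
  assume "\<tau> \<in> supp (bd n (d + 1) (restrict_chain c S))"
  then have nz: "bd n (d + 1) (restrict_chain c S) \<tau> \<noteq> 0" by (simp add: supp_def)
  then obtain v where \<tau>: "\<tau> \<subseteq> {1..n}" "card \<tau> = d" and v: "v \<notin> \<tau>" "insert v \<tau> \<in> S"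
    by (auto simp: restrict_chain_def split: if_splits dest!: bd_nonzero_imp_coface)
  show "\<tau> \<in> cplx D"
  proof (rule ccontr)
    assume \<tau>D: "\<tau> \<notin> cplx D"
    have "restrict_chain c S (insert w \<tau>) = c (insert w \<tau>)" if "w \<in> {1..n} - \<tau>" for w
    proof (cases "insert w \<tau> \<in> S")
      case False
      have "c (insert w \<tau>) = 0"
      proof (rule ccontr)
        assume "c (insert w \<tau>) \<noteq> 0"
        moreover have "insert w \<tau> \<notin> D" using \<tau>D by (auto simp: cplx_def)
        moreover have "facet_adj d (insert v \<tau>) (insert w \<tau>)"
          using False that v \<tau> by (intro facet_adj_insert) auto
        ultimately show False using closed[OF v(2)] False by (auto simp: supp_def)
      qed
      then show ?thesis using False by (simp add: restrict_chain_def)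
    qed (simp add: restrict_chain_def)
    then have "bd n (d + 1) (restrict_chain c S) \<tau> = bd n (d + 1) c \<tau>"
      by (rule bd_cong_cofaces)
    then show False using nz assms(1) by simp
  qed
qed

definition separated_partition :: "'a set \<Rightarrow> ('a \<Rightarrow> 'a \<Rightarrow> bool) \<Rightarrow> nat \<Rightarrow> (nat \<Rightarrow> 'a set) \<Rightarrow> bool"
  where "separated_partition V E m P \<longleftrightarrow>
    (\<forall>i<m. P i \<noteq> {} \<and> P i \<subseteq> V) \<and> (\<forall>x\<in>V. \<exists>i<m. x \<in> P i) \<and>
    (\<forall>i<m. \<forall>j<m. \<forall>x\<in>P i. \<forall>y\<in>P j. x = y \<or> E x y \<longrightarrow> i = j)"

lemma separated_partitionD:
  assumes "separated_partition V E m P"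
  shows "i < m \<Longrightarrow> P i \<noteq> {}" and "i < m \<Longrightarrow> P i \<subseteq> V" and "x \<in> V \<Longrightarrow> \<exists>i<m. x \<in> P i"
    and "i < m \<Longrightarrow> j < m \<Longrightarrow> x \<in> P i \<Longrightarrow> y \<in> P j \<Longrightarrow> x = y \<or> E x y \<Longrightarrow> i = j"
  using assms unfolding separated_partition_def by blast+

lemma rtrancl_sym_Image_eq:
  assumes "sym R" "(x, y) \<in> R\<^sup>*"
  shows "R\<^sup>* `` {x} = R\<^sup>* `` {y}"
proof -
  have "(y, x) \<in> R\<^sup>*" using assms sym_rtrancl symD by metis
  then show ?thesis using assms(2) by (auto intro: rtrancl_trans)
qed

lemma components_separated_partition:
  assumes "symp E" "card (components V E) = m" "m > 0"
  obtains P where "separated_partition V E m P"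
proof -
  define R where "R = {(a, b). a \<in> V \<and> b \<in> V \<and> E a b}"
  define comp where "comp x = R\<^sup>* `` {x}" for x
  have comp_sub: "comp x \<subseteq> V" if "x \<in> V" for x
    using that by (auto simp: comp_def R_def elim: rtranclE)
  have comps: "components V E = comp ` V"
    unfolding components_def comp_def R_def
    by (intro image_cong refl) (auto elim: rtranclE)
  have symR: "sym R" using assms(1) by (auto simp: R_def sym_def symp_def)
  have comp_eq: "comp x = comp y" if "(x, y) \<in> R\<^sup>*" for x y
    unfolding comp_def using rtrancl_sym_Image_eq[OF symR that] .
  have "finite (components V E)" using assms(2,3) card.infinite by force
  then obtain P where P: "bij_betw P {0..<m} (comp ` V)"
    using ex_bij_betw_nat_finite assms(2) comps by metis
  have P_comp: "\<exists>x\<in>V. P i = comp x" if "i < m" for i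
    using bij_betw_apply[OF P] that by auto
  have P_comp_mem: "P i = comp x" if "i < m" "x \<in> P i" for i x
    using P_comp[OF that(1)] that(2) comp_eq unfolding comp_def by auto
  show thesis
  proof (rule that, unfold separated_partition_def, intro conjI ballI allI impI)
    fix i
    assume "i < m"
    then obtain x where "x \<in> V" "P i = comp x" using P_comp by blast
    then show "P i \<noteq> {}" "P i \<subseteq> V" using comp_sub by (auto simp: comp_def)
  next
    fix x
    assume "x \<in> V"
    then obtain i where "i < m" "P i = comp x"
      using bij_betw_imp_surj_on[OF P] by (metis atLeastLessThan_iff imageE image_eqI)
    then show "\<exists>i<m. x \<in> P i" by (auto simp: comp_def)
  next
    fix i j x y
    assume ij: "i < m" "j < m" and xy: "x \<in> P i" "y \<in> P j" "x = y \<or> E x y"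
    have "x \<in> V" "y \<in> V" using xy(1,2) ij P_comp comp_sub by blast+
    then have "(x, y) \<in> R\<^sup>*" using xy(3) by (auto simp: R_def)
    then have "P i = P j" using P_comp_mem ij xy comp_eq by metis
    then show "i = j" using P ij by (auto simp: bij_betw_def inj_on_def)
  qed
qed

lemma sum_restrict_chain_block:
  fixes c :: "nat set \<Rightarrow> 'f::semiring_0"
  assumes "separated_partition V E m P" "I \<subseteq> {..<m}" "i0 < m" "\<sigma> \<in> P i0"
  shows "(\<Sum>i\<in>I. a i * restrict_chain c (P i) \<sigma>) = (if i0 \<in> I then a i0 * c \<sigma> else 0)"
proof -
  have "(\<Sum>i\<in>I. a i * restrict_chain c (P i) \<sigma>) = (\<Sum>i\<in>I. if i = i0 then a i0 * c \<sigma> else 0)"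
    using separated_partitionD(4)[OF assms(1) _ assms(3) _ assms(4)] assms(2,4)
    by (intro sum.cong) (auto simp: restrict_chain_def)
  also have "\<dots> = (if i0 \<in> I then a i0 * c \<sigma> else 0)"
    using finite_subset[OF assms(2)] by (simp add: sum.delta)
  finally show ?thesis .
qed

locale cycle_partition =
  fixes n d :: nat and Z :: "nat set \<Rightarrow> 'f::field" and D :: "nat set set"
    and m :: nat and P :: "nat \<Rightarrow> nat set set"
  assumes cycle: "is_cycle n (d + 1) Z"
    and D_subset: "D \<subseteq> supp Z"
    and partition: "separated_partition (supp Z - D) (facet_adj d) m P"
begin

definition piece_boundary :: "nat \<Rightarrow> nat set \<Rightarrow> 'f" where
  "piece_boundary i = bd n (d + 1) (restrict_chain Z (P i))"

lemmas P_nonempty = separated_partitionD(1)[OF partition]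
  and P_subset = separated_partitionD(2)[OF partition]
  and P_cover = separated_partitionD(3)[OF partition]
  and P_separated = separated_partitionD(4)[OF partition]

lemma is_cycle_piece_boundary: "is_cycle n d (piece_boundary i)"
  using bd_is_cycle[of n d] by (simp add: piece_boundary_def)

lemma supp_piece_boundary_subset_cplx:
  assumes "i < m"
  shows "supp (piece_boundary i) \<subseteq> cplx D"
  unfolding piece_boundary_def
proof (rule supp_bd_restrict_chain_subset_cplx)
  show "bd n (d + 1) Z = (\<lambda>_. 0)" using cycle by (simp add: is_cycle_def)
  fix \<sigma> \<rho>
  assume "\<sigma> \<in> P i" "\<rho> \<in> supp Z - D" "facet_adj d \<sigma> \<rho>"
  then show "\<rho> \<in> P i" using P_cover P_separated assms by metis
qed

lemma supp_piece_boundaries_disjoint: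
  assumes "i < m" "j < m" "i \<noteq> j"
  shows "supp (piece_boundary i) \<inter> supp (piece_boundary j) = {}"
  unfolding piece_boundary_def
  using assms P_separated by (intro supp_bd_restrict_chain_disjoint) blast

lemma Z_decomposition:
  "Z \<sigma> = restrict_chain Z D \<sigma> + (\<Sum>i<m. 1 * restrict_chain Z (P i) \<sigma>)"
proof (cases "\<sigma> \<in> supp Z - D")
  case True
  then obtain i0 where "i0 < m" "\<sigma> \<in> P i0" using P_cover by blast
  then show ?thesis
    using True sum_restrict_chain_block[OF partition, of "{..<m}" i0 \<sigma> "\<lambda>_. 1" Z]
    by (simp add: restrict_chain_def)
next
  case False
  then have "restrict_chain Z (P i) \<sigma> = 0" if "i < m" for i
    using P_subset[OF that] by (auto simp: restrict_chain_def)
  moreover have "restrict_chain Z D \<sigma> = Z \<sigma>"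
    using False by (auto simp: restrict_chain_def supp_def)
  ultimately show ?thesis by simp
qed

lemma sum_piece_boundaries_in_boundaries:
  "(\<lambda>\<tau>. \<Sum>i<m. 1 * piece_boundary i \<tau>) \<in> boundaries n (d + 1) (cplx D)"
proof -
  define B where "B = (\<lambda>\<sigma>. - restrict_chain Z D \<sigma>)"
  have "supp B \<subseteq> D" by (auto simp: B_def supp_def restrict_chain_def)
  then have "is_chain n (d + 1) B" "supp B \<subseteq> cplx D"
    using cycle D_subset is_chain_supp_subset[of n "d + 1" Z B] by (auto simp: is_cycle_def cplx_def)
  moreover have "(\<lambda>\<tau>. \<Sum>i<m. 1 * piece_boundary i \<tau>) = bd n (d + 1) B"
  proof
    fix \<tau>
    have "0 = bd n (d + 1) Z \<tau>" using cycle by (simp add: is_cycle_def)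
    also have "\<dots> = bd n (d + 1) (\<lambda>\<sigma>. restrict_chain Z D \<sigma> + (\<Sum>i<m. 1 * restrict_chain Z (P i) \<sigma>)) \<tau>"
      by (rule bd_cong_cofaces) (rule Z_decomposition)
    also have "\<dots> = bd n (d + 1) (restrict_chain Z D) \<tau> + (\<Sum>i<m. 1 * piece_boundary i \<tau>)"
      by (simp only: bd_add bd_linear_combination[OF finite_lessThan] piece_boundary_def)
    finally show "(\<Sum>i<m. 1 * piece_boundary i \<tau>) = bd n (d + 1) B \<tau>"
      by (simp add: B_def bd_uminus eq_neg_iff_add_eq_0 add.commute)
  qed
  ultimately show ?thesis unfolding boundaries_def by blast
qed

lemma piece_boundaries_independent:
  assumes simple: "simple_cycle n (d + 1) Z" and "j < m" "i \<in> {..<m} - {j}"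
    and "(\<lambda>\<tau>. \<Sum>i\<in>{..<m} - {j}. a i * piece_boundary i \<tau>) \<in> boundaries n (d + 1) (cplx D)"
  shows "a i = 0"
proof -
  define I where "I = {..<m} - {j}"
  obtain B where B: "is_chain n (d + 1) B" "supp B \<subseteq> cplx D"
    and bd_B: "(\<lambda>\<tau>. \<Sum>i\<in>I. a i * piece_boundary i \<tau>) = bd n (d + 1) B"
    using assms(4) by (auto simp: boundaries_def I_def)
  have Z_chain: "is_chain n (d + 1) Z" using cycle by (simp add: is_cycle_def)
  have "supp B \<subseteq> D"
  proof (rule chain_on_cplx_supp_subset[OF B])
    fix \<delta>
    assume "\<delta> \<in> D"
    then show "finite \<delta> \<and> card \<delta> = d + 1"
      using Z_chain D_subset finite_subset by (fastforce simp: is_chain_def supp_def)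
  qed
  then have B_vanishes: "B \<sigma> = 0" if "\<sigma> \<notin> D" for \<sigma>
    using that by (auto simp: supp_def)
  define W where "W = (\<lambda>\<sigma>. (\<Sum>i\<in>I. a i * restrict_chain Z (P i) \<sigma>) - B \<sigma>)"
  have "bd n (d + 1) W = (\<lambda>_. 0)"
  proof
    fix \<tau>
    have "bd n (d + 1) W \<tau> = (\<Sum>i\<in>I. a i * piece_boundary i \<tau>) - bd n (d + 1) B \<tau>"
      unfolding W_def bd_diff bd_linear_combination[OF finite_Diff[OF finite_lessThan]] I_def
        piece_boundary_def ..
    then show "bd n (d + 1) W \<tau> = 0" using fun_cong[OF bd_B, of \<tau>] by simp
  qed
  moreover have "supp W \<subseteq> supp Z"
  proof
    fix \<sigma>
    assume "\<sigma> \<in> supp W"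
    moreover have "W \<sigma> = 0" if "Z \<sigma> = 0"
    proof -
      have "\<sigma> \<notin> D" using that D_subset by (auto simp: supp_def)
      moreover have "restrict_chain Z (P i) \<sigma> = 0" for i
        using that by (simp add: restrict_chain_def)
      ultimately show ?thesis using B_vanishes by (simp add: W_def)
    qed
    ultimately show "\<sigma> \<in> supp Z" by (auto simp: supp_def)
  qed
  ultimately have "is_cycle n (d + 1) W" "supp W \<subseteq> supp Z"
    using is_chain_supp_subset[OF Z_chain] by (auto simp: is_cycle_def)
  then obtain c where W: "W = (\<lambda>\<sigma>. c * Z \<sigma>)"
    using simple by (auto simp: simple_cycle_def)
  have Z_block: "\<sigma> \<in> supp Z - D" if "i0 < m" "\<sigma> \<in> P i0" for i0 \<sigma>
    using P_subset that by blast
  have W_block: "W \<sigma> = (if i0 \<in> I then a i0 * Z \<sigma> else 0)" if "i0 < m" "\<sigma> \<in> P i0" for i0 \<sigma>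
    using sum_restrict_chain_block[OF partition _ that, of I a Z] B_vanishes Z_block[OF that]
    by (simp add: W_def I_def)
  obtain \<sigma>j where \<sigma>j: "\<sigma>j \<in> P j" using P_nonempty \<open>j < m\<close> by blast
  have "c * Z \<sigma>j = 0" using W W_block[OF \<open>j < m\<close> \<sigma>j] by (simp add: I_def fun_eq_iff)
  then have "c = 0" using Z_block[OF \<open>j < m\<close> \<sigma>j] by (simp add: supp_def)
  obtain \<sigma>i where \<sigma>i: "\<sigma>i \<in> P i" using P_nonempty assms(3) by blast
  have "a i * Z \<sigma>i = 0"
    using W W_block[OF _ \<sigma>i] assms(3) \<open>c = 0\<close> by (simp add: I_def fun_eq_iff)
  then show "a i = 0" using Z_block[OF _ \<sigma>i] assms(3) by (simp add: supp_def)
qed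

end

theorem lemma5p1:
  fixes n d m :: nat and Z :: "nat set \<Rightarrow> 'f::field" and D :: "nat set set"
  assumes "d \<ge> 1"
    and "simple_cycle n (d + 1) Z"
    and "D \<subseteq> supp Z"
    and "card (components (supp Z - D) (facet_adj d)) = m"
    and "m > 1"
  shows "\<exists>C :: nat \<Rightarrow> nat set \<Rightarrow> 'f.
     (\<forall>i<m. is_cycle n d (C i) \<and> supp (C i) \<subseteq> cplx D) \<and>
     (\<forall>i<m. \<forall>j<m. i \<noteq> j \<longrightarrow> supp (C i) \<inter> supp (C j) = {}) \<and>
     (\<forall>j<m. \<forall>a :: nat \<Rightarrow> 'f.
        (\<lambda>\<tau>. \<Sum>i\<in>{..<m} - {j}. a i * C i \<tau>) \<in> boundaries n (d + 1) (cplx D)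
        \<longrightarrow> (\<forall>i\<in>{..<m} - {j}. a i = 0)) \<and>
     (\<exists>a :: nat \<Rightarrow> 'f. (\<exists>i<m. a i \<noteq> 0) \<and>
        (\<lambda>\<tau>. \<Sum>i<m. a i * C i \<tau>) \<in> boundaries n (d + 1) (cplx D))"
proof -
  have "symp (facet_adj d)" by (auto simp: symp_def facet_adj_def Int_commute)
  then obtain P where "separated_partition (supp Z - D) (facet_adj d) m P"
    using components_separated_partition assms(4,5) by (metis gr_zeroI not_one_less_zero)
  then interpret cycle_partition n d Z D m P
    using assms(2,3) by unfold_locales (simp_all add: simple_cycle_def)
  show ?thesis
  proof (intro exI[of _ piece_boundary] conjI allI impI ballI)
    show "is_cycle n d (piece_boundary i)" for i
      by (rule is_cycle_piece_boundary)
    show "supp (piece_boundary i) \<subseteq> cplx D" if "i < m" for i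
      using that by (rule supp_piece_boundary_subset_cplx)
    show "supp (piece_boundary i) \<inter> supp (piece_boundary j) = {}" if "i < m" "j < m" "i \<noteq> j" for i j
      using that by (rule supp_piece_boundaries_disjoint)
    show "a i = 0" if "j < m" "(\<lambda>\<tau>. \<Sum>i\<in>{..<m} - {j}. a i * piece_boundary i \<tau>) \<in> boundaries n (d + 1) (cplx D)"
      "i \<in> {..<m} - {j}" for j a i
      using assms(2) that by (intro piece_boundaries_independent)
    show "\<exists>a. (\<exists>i<m. a i \<noteq> 0) \<and> (\<lambda>\<tau>. \<Sum>i<m. a i * piece_boundary i \<tau>) \<in> boundaries n (d + 1) (cplx D)"
      using assms(5) sum_piece_boundaries_in_boundaries by (intro exI[of _ "\<lambda>_. 1"]) auto
  qed
qed

end
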